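(* Let $\rho$ be a probability distribution on $\mathbb N_0$ with finite first moment, $\sum_k k\rho_k<\infty$, and let $\mathcal T$ be a Galton–Watson tree $\mathrm{GW}(\rho)$. Then for every non-decreasing family of positive constants $(C_{k,T})$ and every finite measure $\varsigma$ on $\mathcal J$, $\mathcal T$ is a.s. finitely dissociable.
   Context: $\mathrm{GW}(\rho)$ is the random rooted tree in which the root and every other vertex independently have a number of children distributed according to $\rho$. Finite dissociability. Fix a countable set $\mathcal J$, a finite measure $\varsigma$ on $\mathcal J$ with $\varsigma(\mathcal J)>0$, and constants $C_{k,T}\in(0,\infty)$, $k\in\mathbb N$, $T\in\mathbb R_+$, non-decreasing in each index. For a vertex $v$ of a graph $G$ let $\mathrm{cl}_v$ denote $v$ together with its neighbours. A deterministic locally finite graph $G$ is finitely dissociable if for every $T\in(0,\infty)$ there is $\Delta\in(0,T]$ such that the following holds: if $(N_v)_{v\in V_G}$ are i.i.d. Poisson random measures on $\mathbb R_+^2\times\mathcal J$ with intensity $\mathrm{Leb}^2\otimes\varsigma$ and a vertex $v$ is called active when $N_v((0,\Delta]\times(0,C_{|\mathrm{cl}_v|,T}]\times\mathcal J)>0$ (so vertices are independently active with probability $1-\exp(-\Delta\varsigma(\mathcal J)C_{|\mathrm{cl}_v|,T})$), then a.s. every connected component of the subgraph of $G$ induced by the active vertices is finite. A random graph is a.s. finitely dissociable if its realization is finitely dissociable almost surely. *)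

theory Defs
  imports "HOL-Probability.Probability"
begin

definition nbrs :: "'v set \<Rightarrow> ('v \<Rightarrow> 'v \<Rightarrow> bool) \<Rightarrow> 'v \<Rightarrow> 'v set" where
  "nbrs V E v = {w \<in> V. E v w}"

definition cl :: "'v set \<Rightarrow> ('v \<Rightarrow> 'v \<Rightarrow> bool) \<Rightarrow> 'v \<Rightarrow> 'v set" where
  "cl V E v = insert v (nbrs V E v)"

definition locally_finite :: "'v set \<Rightarrow> ('v \<Rightarrow> 'v \<Rightarrow> bool) \<Rightarrow> bool" where
  "locally_finite V E \<longleftrightarrow> (\<forall>v\<in>V. finite (nbrs V E v))"

definition induced_edge :: "'v set \<Rightarrow> ('v \<Rightarrow> 'v \<Rightarrow> bool) \<Rightarrow> 'v set \<Rightarrow> 'v \<Rightarrow> 'v \<Rightarrow> bool" where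
  "induced_edge V E A x y \<longleftrightarrow> x \<in> V \<and> y \<in> V \<and> x \<in> A \<and> y \<in> A \<and> E x y"

definition all_components_finite :: "'v set \<Rightarrow> ('v \<Rightarrow> 'v \<Rightarrow> bool) \<Rightarrow> 'v set \<Rightarrow> bool" where
  "all_components_finite V E A \<longleftrightarrow>
     (\<forall>v\<in>A. finite {w. (induced_edge V E A)\<^sup>*\<^sup>* v w})"

text \<open>Probability that a vertex is active: the Poisson random measure N_v of intensity
  Leb^2 \<otimes> \<sigma> charges the box (0,\<Delta>] \<times> (0,C] \<times> J with probability
  1 - exp(-\<Delta> \<sigma>(J) C); the vertices are independent.\<close>
definition active_prob ::
  "'j measure \<Rightarrow> (nat \<Rightarrow> real \<Rightarrow> real) \<Rightarrow> real \<Rightarrow> real \<Rightarrow> nat \<Rightarrow> real" where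
  "active_prob \<sigma> C T \<Delta> k = 1 - exp (- (\<Delta> * measure \<sigma> (space \<sigma>) * C k T))"

definition activity_law ::
  "'j measure \<Rightarrow> (nat \<Rightarrow> real \<Rightarrow> real) \<Rightarrow> real \<Rightarrow> real \<Rightarrow> 'v set \<Rightarrow> ('v \<Rightarrow> 'v \<Rightarrow> bool)
     \<Rightarrow> ('v \<Rightarrow> bool) measure" where
  "activity_law \<sigma> C T \<Delta> V E =
     (\<Pi>\<^sub>M v\<in>V. measure_pmf (bernoulli_pmf (active_prob \<sigma> C T \<Delta> (card (cl V E v)))))"

definition finitely_dissociable ::
  "'j measure \<Rightarrow> (nat \<Rightarrow> real \<Rightarrow> real) \<Rightarrow> 'v set \<Rightarrow> ('v \<Rightarrow> 'v \<Rightarrow> bool) \<Rightarrow> bool" where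
  "finitely_dissociable \<sigma> C V E \<longleftrightarrow>
     locally_finite V E \<and>
     (\<forall>T>0. \<exists>\<Delta>. 0 < \<Delta> \<and> \<Delta> \<le> T \<and>
        (AE a in activity_law \<sigma> C T \<Delta> V E. all_components_finite V E {v \<in> V. a v}))"

text \<open>Vertices are words u :: nat list; X u is the number of children of u.
  u = [i1,...,in] belongs to the tree iff each letter is smaller than the
  number of children of the corresponding ancestor.\<close>
definition GW_vertices :: "(nat list \<Rightarrow> nat) \<Rightarrow> nat list set" where
  "GW_vertices X = {u. \<forall>k<length u. u ! k < X (take k u)}"

definition tree_edge :: "nat list \<Rightarrow> nat list \<Rightarrow> bool" where
  "tree_edge u w \<longleftrightarrow> (\<exists>i. w = u @ [i]) \<or> (\<exists>i. u = w @ [i])"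

definition offspring_law :: "nat pmf \<Rightarrow> (nat list \<Rightarrow> nat) measure" where
  "offspring_law \<rho> = (\<Pi>\<^sub>M u\<in>(UNIV :: nat list set). measure_pmf \<rho>)"

end

theory Submission
  imports Defs
begin

(* Fix T, an integer n >= T and Delta = min T delta.  A vertex v of the tree has a closed
   neighbourhood of at most X v + 2 vertices, so it is active with probability at most p (X v),
   where p x = 1 - exp (-delta * sigma(J) * C (x + 2) n).  If the active component of
   a vertex is infinite, then some ancestor t of it starts active descending paths of every
   length k.  Given the tree, the probability of this is at most W_k(t), the sum over descending
   paths of length k from t of the products of p along the path.  Averaging over the i.i.d.
   offspring numbers gives E W_k(t) = mu^k with mu = E[X p(X)], and by the finite first moment
   and dominated convergence mu < 1 once delta is small.  Hence almost surely sum_k W_k(t) is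
   finite for every vertex t and every n, so W_k(t) tends to 0 and all active components are
   finite. *)

lemma ennreal_eq_0_if_le_summable_terms:
  fixes g :: "nat \<Rightarrow> ennreal"
  assumes le: "\<And>k. e \<le> g k" and fin: "(\<Sum>k. g k) \<noteq> \<top>"
  shows "e = 0"
proof -
  have g_fin: "g k \<noteq> \<top>" for k
    using ennreal_suminf_lessD[of g \<top> k] fin by (simp add: less_top)
  then have g_eq: "g = (\<lambda>k. ennreal (enn2real (g k)))"
    by (simp add: ennreal_enn2real_if)
  have "summable (\<lambda>k. enn2real (g k))"
    using fin by (subst (asm) g_eq) (auto intro: summable_suminf_not_top)
  then have "(\<lambda>k. enn2real (g k)) \<longlonglongrightarrow> 0"
    by (rule summable_LIMSEQ_zero)
  moreover have "enn2real e \<le> enn2real (g k)" for k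
    using le[of k] g_fin[of k] by (intro enn2real_mono) (auto simp: less_top)
  ultimately have "enn2real e \<le> 0"
    by (intro LIMSEQ_le_const[of "\<lambda>k. enn2real (g k)" 0]) auto
  moreover have "e \<noteq> \<top>"
    using le[of 0] g_fin[of 0] by (auto simp: top_unique)
  ultimately show "e = 0"
    by (metis enn2real_nonneg ennreal_0 ennreal_enn2real_if order_antisym)
qed

lemma suminf_power_ennreal_neq_top:
  fixes \<mu> :: ennreal
  assumes "\<mu> < 1"
  shows "(\<Sum>k. \<mu> ^ k) \<noteq> \<top>"
proof -
  obtain r where r: "\<mu> = ennreal r" "0 \<le> r" "r < 1"
    using assms by (cases \<mu> rule: ennreal_cases) (auto simp: ennreal_less_iff)
  then have "(\<Sum>k. ennreal (r ^ k)) \<noteq> \<top>"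
    by (intro ennreal_suminf_neq_top summable_geometric) auto
  then show ?thesis
    using r by (simp add: ennreal_power)
qed

lemma nn_integral_PiM_split:
  fixes M :: "'i \<Rightarrow> 'a measure" and g :: "('i \<Rightarrow> 'a) \<Rightarrow> ennreal"
  assumes M: "\<And>i. prob_space (M i)" and i: "i \<in> I"
    and g: "g \<in> borel_measurable (PiM I M)"
  shows "(\<integral>\<^sup>+X. g X \<partial>PiM I M) = (\<integral>\<^sup>+x. \<integral>\<^sup>+Y. g (Y(i := x)) \<partial>PiM (I - {i}) M \<partial>M i)"
proof -
  interpret Q: prob_space "PiM (I - {i}) M"
    using M by (rule prob_space_PiM)
  have upd: "(\<lambda>p. (snd p)(i := fst p)) \<in> M i \<Otimes>\<^sub>M PiM (I - {i}) M \<rightarrow>\<^sub>M PiM I M"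
    using i by (intro measurable_fun_upd[where J = "I - {i}"]) auto
  have distr_eq: "distr (M i \<Otimes>\<^sub>M PiM (I - {i}) M) (PiM I M) (\<lambda>p. (snd p)(i := fst p)) = PiM I M"
    using distr_pair_PiM_eq_PiM[of "I - {i}" M i] M i by (simp add: insert_absorb case_prod_beta')
  have "(\<integral>\<^sup>+X. g X \<partial>PiM I M) = (\<integral>\<^sup>+p. g ((snd p)(i := fst p)) \<partial>(M i \<Otimes>\<^sub>M PiM (I - {i}) M))"
    using nn_integral_distr[OF upd, of g] g by (simp add: distr_eq)
  also have "\<dots> = (\<integral>\<^sup>+x. \<integral>\<^sup>+Y. g (Y(i := x)) \<partial>PiM (I - {i}) M \<partial>M i)"
    using Q.nn_integral_fst[of "\<lambda>p. g ((snd p)(i := fst p))" "M i"] measurable_comp[OF upd g]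
    by (simp add: comp_def)
  finally show ?thesis .
qed

lemma nn_integral_PiM_remove:
  fixes M :: "'i \<Rightarrow> 'a measure" and g :: "('i \<Rightarrow> 'a) \<Rightarrow> ennreal"
  assumes M: "\<And>i. prob_space (M i)" and i: "i \<in> I"
    and g: "g \<in> borel_measurable (PiM I M)" "g \<in> borel_measurable (PiM (I - {i}) M)"
    and g_indep: "\<And>X x. g (X(i := x)) = g X"
  shows "(\<integral>\<^sup>+Y. g Y \<partial>PiM (I - {i}) M) = (\<integral>\<^sup>+X. g X \<partial>PiM I M)"
proof -
  interpret prob_space "M i"
    using M by blast
  show ?thesis
    using nn_integral_PiM_split[OF M i g(1)] by (simp add: g_indep emeasure_space_1)
qed

lemma sets_bernoulli_PiM_all_true:
  fixes V :: "'v set" and q :: "'v \<Rightarrow> real"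
  defines "P \<equiv> \<Pi>\<^sub>M v\<in>V. measure_pmf (bernoulli_pmf (q v))"
  assumes "finite J" "J \<subseteq> V"
  shows "{a \<in> space P. \<forall>u\<in>J. a u} \<in> sets P"
proof -
  have "{a \<in> space P. a u} \<in> sets P" if "u \<in> V" for u
    unfolding P_def using that by measurable
  then show ?thesis
    using assms(2,3) by (intro sets.sets_Collect_finite_All) auto
qed

lemma emeasure_bernoulli_PiM_all_true:
  fixes V :: "'v set" and q :: "'v \<Rightarrow> real"
  defines "P \<equiv> \<Pi>\<^sub>M v\<in>V. measure_pmf (bernoulli_pmf (q v))"
  assumes "finite J" "J \<subseteq> V" "\<And>v. v \<in> J \<Longrightarrow> 0 \<le> q v \<and> q v \<le> 1"
  shows "emeasure P {a \<in> space P. \<forall>u\<in>J. a u} = (\<Prod>u\<in>J. ennreal (q u))"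
proof -
  interpret product_prob_space "\<lambda>v. measure_pmf (bernoulli_pmf (q v))" V
    by unfold_locales
  have "emeasure P {a \<in> space P. \<forall>u\<in>J. a u \<in> {True}} = (\<Prod>u\<in>J. emeasure (measure_pmf (bernoulli_pmf (q u))) {True})"
    unfolding P_def using assms by (intro emeasure_PiM_Collect) auto
  also have "\<dots> = (\<Prod>u\<in>J. ennreal (q u))"
    using assms by (intro prod.cong) (auto simp: emeasure_pmf_single)
  finally show ?thesis by simp
qed

lemma exists_subcritical_rate:
  fixes \<rho> :: "nat pmf" and c :: "nat \<Rightarrow> real"
  assumes first_moment: "integrable (measure_pmf \<rho>) real" and c: "\<And>x. 0 \<le> c x"
  shows "\<exists>\<delta>>0. (\<integral>\<^sup>+x. of_nat x * ennreal (1 - exp (- (\<delta> * c x))) \<partial>measure_pmf \<rho>) < 1"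
proof -
  define u where "u j x = ennreal (real x * (1 - exp (- (inverse (real (Suc j)) * c x))))" for j x
  have u_le: "u j x \<le> ennreal (real x)" for j x
    unfolding u_def using c[of x] by (intro ennreal_leI) (simp add: mult_left_le)
  have u_lim: "(\<lambda>j. u j x) \<longlonglongrightarrow> 0" for x
  proof -
    have "(\<lambda>j. real x * (1 - exp (- (inverse (real (Suc j)) * c x)))) \<longlonglongrightarrow> real x * (1 - exp (- (0 * c x)))"
      by (intro tendsto_intros LIMSEQ_inverse_real_of_nat)
    then show ?thesis
      unfolding u_def by (simp add: tendsto_ennrealI[where x = 0, simplified])
  qed
  have "(\<integral>\<^sup>+x. ennreal (real x) \<partial>measure_pmf \<rho>) < \<top>"
    using nn_integral_eq_integral[OF first_moment] by simp
  then have "(\<lambda>j. \<integral>\<^sup>+x. u j x \<partial>measure_pmf \<rho>) \<longlonglongrightarrow> (\<integral>\<^sup>+x. 0 \<partial>measure_pmf \<rho>)"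
    using u_le u_lim
    by (intro nn_integral_dominated_convergence[where w = "\<lambda>x. ennreal (real x)"]) auto
  then have "(\<lambda>j. \<integral>\<^sup>+x. u j x \<partial>measure_pmf \<rho>) \<longlonglongrightarrow> 0"
    by simp
  then have "eventually (\<lambda>j. (\<integral>\<^sup>+x. u j x \<partial>measure_pmf \<rho>) < 1) sequentially"
    by (rule order_tendstoD(2)) simp
  then obtain j where "(\<integral>\<^sup>+x. u j x \<partial>measure_pmf \<rho>) < 1"
    by (auto simp: eventually_sequentially)
  moreover have "u j x = of_nat x * ennreal (1 - exp (- (inverse (real (Suc j)) * c x)))" for x
    unfolding u_def using c[of x] by (simp add: ennreal_mult ennreal_of_nat_eq_real_of_nat)
  ultimately show ?thesis
    by (intro exI[of _ "inverse (real (Suc j))"]) simp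
qed

section \<open>Descending paths in Ulam--Harris trees\<close>

definition GW_path :: "(nat list \<Rightarrow> nat) \<Rightarrow> nat list \<Rightarrow> nat list \<Rightarrow> bool" where
  "GW_path X t s \<longleftrightarrow> (\<forall>j<length s. s ! j < X (t @ take j s))"

definition GW_paths :: "(nat list \<Rightarrow> nat) \<Rightarrow> nat \<Rightarrow> nat list \<Rightarrow> nat list set" where
  "GW_paths X k t = {s. length s = k \<and> GW_path X t s}"

(* Recursion over the first generation instead of the closed form path_weight_sum_eq: this is
   what lets its expectation over the offspring numbers be computed one generation at a time. *)
fun path_weight_sum :: "(nat list \<Rightarrow> ennreal) \<Rightarrow> (nat list \<Rightarrow> nat) \<Rightarrow> nat \<Rightarrow> nat list \<Rightarrow> ennreal" where
  "path_weight_sum w X 0 t = 1"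
| "path_weight_sum w X (Suc k) t = w t * (\<Sum>i<X t. path_weight_sum w X k (t @ [i]))"

lemma GW_path_Nil [simp]: "GW_path X t []"
  by (simp add: GW_path_def)

lemma GW_path_Cons: "GW_path X t (i # s) \<longleftrightarrow> i < X t \<and> GW_path X (t @ [i]) s"
  unfolding GW_path_def by (simp add: All_less_Suc2)

lemma GW_path_take: "GW_path X t s \<Longrightarrow> GW_path X t (take k s)"
  unfolding GW_path_def by auto

lemma GW_path_append: "GW_path X t (s @ s') \<longleftrightarrow> GW_path X t s \<and> GW_path X (t @ s) s'"
  by (induction s arbitrary: t) (simp_all add: GW_path_Cons)

lemma GW_vertices_GW_path: "GW_vertices X = {u. GW_path X [] u}"
  by (simp add: GW_vertices_def GW_path_def)

lemma GW_vertices_append: "t @ s \<in> GW_vertices X \<longleftrightarrow> t \<in> GW_vertices X \<and> GW_path X t s"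
  by (simp add: GW_vertices_GW_path GW_path_append)

lemma GW_vertices_take: "u \<in> GW_vertices X \<Longrightarrow> take j u \<in> GW_vertices X"
  by (metis GW_vertices_append append_take_drop_id)

lemma GW_paths_0: "GW_paths X 0 t = {[]}"
  by (auto simp: GW_paths_def GW_path_def)

lemma GW_paths_Suc: "GW_paths X (Suc k) t = (\<Union>i<X t. Cons i ` GW_paths X k (t @ [i]))"
proof (rule set_eqI)
  fix s show "s \<in> GW_paths X (Suc k) t \<longleftrightarrow> s \<in> (\<Union>i<X t. Cons i ` GW_paths X k (t @ [i]))"
    by (cases s) (auto simp: GW_paths_def GW_path_Cons)
qed

lemma finite_GW_paths: "finite (GW_paths X k t)"
  by (induction k arbitrary: t) (auto simp: GW_paths_0 GW_paths_Suc)

lemma GW_paths_prefix_in_GW_vertices: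
  assumes "t \<in> GW_vertices X" "s \<in> GW_paths X k t"
  shows "t @ take j s \<in> GW_vertices X"
  using assms GW_vertices_append GW_vertices_take[of "t @ s" X "length t + j"]
  by (auto simp: GW_paths_def)

lemma path_weight_sum_eq: "path_weight_sum w X k t = (\<Sum>s\<in>GW_paths X k t. \<Prod>j<k. w (t @ take j s))"
proof (induction k arbitrary: t)
  case 0
  then show ?case by (simp add: GW_paths_0)
next
  case (Suc k)
  have "(\<Sum>s\<in>GW_paths X (Suc k) t. \<Prod>j<Suc k. w (t @ take j s))
      = (\<Sum>i<X t. \<Sum>s\<in>Cons i ` GW_paths X k (t @ [i]). \<Prod>j<Suc k. w (t @ take j s))"
    unfolding GW_paths_Suc by (rule sum.UNION_disjoint) (auto simp: finite_GW_paths)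
  also have "\<dots> = (\<Sum>i<X t. \<Sum>s\<in>GW_paths X k (t @ [i]). w t * (\<Prod>j<k. w ((t @ [i]) @ take j s)))"
    by (subst sum.reindex) (auto simp del: prod.lessThan_Suc simp add: prod.lessThan_Suc_shift)
  also have "\<dots> = w t * (\<Sum>i<X t. path_weight_sum w X k (t @ [i]))"
    by (simp add: Suc sum_distrib_left)
  finally show ?case by simp
qed

section \<open>Active components\<close>

definition active_descendants :: "(nat list \<Rightarrow> nat) \<Rightarrow> (nat list \<Rightarrow> bool) \<Rightarrow> nat list \<Rightarrow> nat list set" where
  "active_descendants X a t = {t @ s | s. t @ s \<in> GW_vertices X \<and> (\<forall>j\<le>length s. a (t @ take j s))}"

lemma active_descendants_self:
  "t \<in> GW_vertices X \<Longrightarrow> a t \<Longrightarrow> t \<in> active_descendants X a t"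
  unfolding active_descendants_def by (intro CollectI exI[of _ "[]"]) simp

lemma active_descendants_snoc:
  assumes "u \<in> active_descendants X a t" "u @ [i] \<in> GW_vertices X" "a (u @ [i])"
  shows "u @ [i] \<in> active_descendants X a t"
proof -
  obtain s where s: "u = t @ s" "\<forall>j\<le>length s. a (t @ take j s)"
    using assms(1) by (auto simp: active_descendants_def)
  have "\<forall>j\<le>length (s @ [i]). a (t @ take j (s @ [i]))"
    using s assms(3) by (auto simp: le_Suc_eq)
  then show ?thesis
    using s(1) assms(2) unfolding active_descendants_def by auto
qed

lemma active_descendants_butlast:
  assumes "u @ [i] \<in> active_descendants X a t" "u @ [i] \<noteq> t"
  shows "u \<in> active_descendants X a t"
proof -
  obtain s where s: "u @ [i] = t @ s" "t @ s \<in> GW_vertices X" "\<forall>j\<le>length s. a (t @ take j s)"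
    using assms(1) by (auto simp: active_descendants_def)
  obtain s' where s': "s = s' @ [i]"
    using s(1) assms(2) by (cases s rule: rev_cases) auto
  have "u = t @ s'" "t @ s' \<in> GW_vertices X"
    using s s' GW_vertices_take[of "t @ s" X "length (t @ s')"] by auto
  moreover have "\<forall>j\<le>length s'. a (t @ take j s')"
  proof (intro allI impI)
    fix j assume "j \<le> length s'"
    then show "a (t @ take j s')"
      using s(3)[rule_format, of j] s' by simp
  qed
  ultimately show ?thesis
    unfolding active_descendants_def by auto
qed

lemma active_component_subset:
  assumes "v \<in> GW_vertices X" "a v"
  shows "{u. (induced_edge (GW_vertices X) tree_edge {v \<in> GW_vertices X. a v})\<^sup>*\<^sup>* v u}
           \<subseteq> (\<Union>j\<le>length v. active_descendants X a (take j v))"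
proof (intro subsetI, drule CollectD)
  fix u
  assume "(induced_edge (GW_vertices X) tree_edge {v \<in> GW_vertices X. a v})\<^sup>*\<^sup>* v u"
  then show "u \<in> (\<Union>j\<le>length v. active_descendants X a (take j v))"
  proof (induction rule: rtranclp_induct)
    case base
    have "v \<in> active_descendants X a (take (length v) v)"
      using assms by (simp add: active_descendants_self)
    then show ?case by blast
  next
    case (step y z)
    then obtain j where j: "j \<le> length v" "y \<in> active_descendants X a (take j v)"
      by blast
    have z: "z \<in> GW_vertices X" "a z" "tree_edge y z"
      using step.hyps(2) by (auto simp: induced_edge_def)
    consider i where "z = y @ [i]" | i where "y = z @ [i]"
      using z(3) unfolding tree_edge_def by blast
    then show ?case
    proof cases
      case (1 i)
      then have "z \<in> active_descendants X a (take j v)"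
        using active_descendants_snoc[OF j(2)] z by simp
      then show ?thesis
        using j(1) by blast
    next
      case (2 i)
      show ?thesis
      proof (cases "y = take j v")
        case True
        then have "z = take (j - 1) v"
          using 2 j(1) by (metis butlast_snoc butlast_take)
        then have "z \<in> active_descendants X a (take (j - 1) v)"
          using z by (simp add: active_descendants_self)
        then show ?thesis
          using j(1) by (intro UN_I[of "j - 1"]) auto
      next
        case False
        then have "z \<in> active_descendants X a (take j v)"
          using j(2) 2 active_descendants_butlast by metis
        then show ?thesis
          using j(1) by blast
      qed
    qed
  qed
qed

lemma all_components_finite_GW:
  assumes "\<And>t. t \<in> GW_vertices X \<Longrightarrow> finite (active_descendants X a t)"
  shows "all_components_finite (GW_vertices X) tree_edge {v \<in> GW_vertices X. a v}"
  unfolding all_components_finite_def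
proof
  fix v assume "v \<in> {v \<in> GW_vertices X. a v}"
  then have v: "v \<in> GW_vertices X" "a v" by auto
  have "finite (\<Union>j\<le>length v. active_descendants X a (take j v))"
    using assms GW_vertices_take[OF v(1)] by simp
  moreover have "{u. (induced_edge (GW_vertices X) tree_edge {v \<in> GW_vertices X. a v})\<^sup>*\<^sup>* v u}
      \<subseteq> (\<Union>j\<le>length v. active_descendants X a (take j v))"
    using v by (rule active_component_subset)
  ultimately show "finite {u. (induced_edge (GW_vertices X) tree_edge {v \<in> GW_vertices X. a v})\<^sup>*\<^sup>* v u}"
    by (rule finite_subset[rotated])
qed

lemma infinite_active_descendants_imp_active_path:
  assumes "infinite (active_descendants X a t)"
  shows "\<exists>s\<in>GW_paths X k t. \<forall>j<k. a (t @ take j s)"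
proof -
  have "finite ((\<lambda>s. t @ s) ` (\<Union>j<k. GW_paths X j t))"
    by (simp add: finite_GW_paths)
  then have "\<not> active_descendants X a t \<subseteq> (\<lambda>s. t @ s) ` (\<Union>j<k. GW_paths X j t)"
    using assms finite_subset by blast
  then obtain s where s: "t @ s \<in> GW_vertices X" "\<forall>j\<le>length s. a (t @ take j s)"
      and long: "t @ s \<notin> (\<lambda>s. t @ s) ` (\<Union>j<k. GW_paths X j t)"
    unfolding active_descendants_def by blast
  have path: "GW_path X t s"
    using s(1) GW_vertices_append by blast
  have "k \<le> length s"
  proof (rule ccontr)
    assume "\<not> k \<le> length s"
    then have "s \<in> (\<Union>j<k. GW_paths X j t)"
      using path by (auto simp: GW_paths_def)
    then show False
      using long by blast
  qed
  then have "take k s \<in> GW_paths X k t"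
    using GW_path_take[OF path] by (simp add: GW_paths_def)
  moreover have "\<forall>j<k. a (t @ take j (take k s))"
    using s(2) \<open>k \<le> length s\<close> by (simp add: min_def)
  ultimately show ?thesis by blast
qed

section \<open>Quenched bound for a fixed tree\<close>

lemma emeasure_active_path_le:
  fixes X :: "nat list \<Rightarrow> nat" and q :: "nat list \<Rightarrow> real"
  defines "P \<equiv> \<Pi>\<^sub>M v\<in>GW_vertices X. measure_pmf (bernoulli_pmf (q v))"
  assumes t: "t \<in> GW_vertices X"
    and q: "\<And>v. v \<in> GW_vertices X \<Longrightarrow> 0 \<le> q v \<and> q v \<le> 1 \<and> ennreal (q v) \<le> w v"
  shows "{a \<in> space P. \<exists>s\<in>GW_paths X k t. \<forall>j<k. a (t @ take j s)} \<in> sets P"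
    and "emeasure P {a \<in> space P. \<exists>s\<in>GW_paths X k t. \<forall>j<k. a (t @ take j s)} \<le> path_weight_sum w X k t"
proof -
  define J where "J s = (\<lambda>j. t @ take j s) ` {..<k}" for s
  have J: "finite (J s)" "J s \<subseteq> GW_vertices X" if "s \<in> GW_paths X k t" for s
    using GW_paths_prefix_in_GW_vertices[OF t that] by (auto simp: J_def)
  have A_sets: "{a \<in> space P. \<forall>u\<in>J s. a u} \<in> sets P" if "s \<in> GW_paths X k t" for s
    unfolding P_def using J[OF that] by (rule sets_bernoulli_PiM_all_true)
  have eq: "{a \<in> space P. \<exists>s\<in>GW_paths X k t. \<forall>j<k. a (t @ take j s)}
      = (\<Union>s\<in>GW_paths X k t. {a \<in> space P. \<forall>u\<in>J s. a u})"
    by (auto simp: J_def)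
  show "{a \<in> space P. \<exists>s\<in>GW_paths X k t. \<forall>j<k. a (t @ take j s)} \<in> sets P"
    unfolding eq using A_sets finite_GW_paths by blast
  have "emeasure P (\<Union>s\<in>GW_paths X k t. {a \<in> space P. \<forall>u\<in>J s. a u})
      \<le> (\<Sum>s\<in>GW_paths X k t. emeasure P {a \<in> space P. \<forall>u\<in>J s. a u})"
    using A_sets finite_GW_paths by (intro emeasure_subadditive_finite) auto
  also have "\<dots> = (\<Sum>s\<in>GW_paths X k t. \<Prod>u\<in>J s. ennreal (q u))"
    unfolding P_def using J q by (intro sum.cong emeasure_bernoulli_PiM_all_true) blast+
  also have "\<dots> = (\<Sum>s\<in>GW_paths X k t. \<Prod>j<k. ennreal (q (t @ take j s)))"
  proof (intro sum.cong refl)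
    fix s assume "s \<in> GW_paths X k t"
    then have "inj_on (\<lambda>j. t @ take j s) {..<k}"
      by (intro inj_onI) (auto simp: GW_paths_def dest: arg_cong[where f = length])
    then show "(\<Prod>u\<in>J s. ennreal (q u)) = (\<Prod>j<k. ennreal (q (t @ take j s)))"
      unfolding J_def by (simp add: prod.reindex)
  qed
  also have "\<dots> \<le> (\<Sum>s\<in>GW_paths X k t. \<Prod>j<k. w (t @ take j s))"
    using q GW_paths_prefix_in_GW_vertices[OF t] by (intro sum_mono prod_mono_ennreal) auto
  also have "\<dots> = path_weight_sum w X k t"
    by (simp add: path_weight_sum_eq)
  finally show "emeasure P {a \<in> space P. \<exists>s\<in>GW_paths X k t. \<forall>j<k. a (t @ take j s)} \<le> path_weight_sum w X k t"
    unfolding eq .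
qed

lemma AE_finite_active_descendants:
  fixes X :: "nat list \<Rightarrow> nat" and q :: "nat list \<Rightarrow> real"
  defines "P \<equiv> \<Pi>\<^sub>M v\<in>GW_vertices X. measure_pmf (bernoulli_pmf (q v))"
  assumes t: "t \<in> GW_vertices X"
    and q: "\<And>v. v \<in> GW_vertices X \<Longrightarrow> 0 \<le> q v \<and> q v \<le> 1 \<and> ennreal (q v) \<le> w v"
    and fin: "(\<Sum>k. path_weight_sum w X k t) \<noteq> \<top>"
  shows "AE a in P. finite (active_descendants X a t)"
proof -
  define B where "B k = {a \<in> space P. \<exists>s\<in>GW_paths X k t. \<forall>j<k. a (t @ take j s)}" for k
  have B_sets: "B k \<in> sets P" for k
    unfolding B_def P_def using t q by (rule emeasure_active_path_le(1))
  have B_le: "emeasure P (B k) \<le> path_weight_sum w X k t" for k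
    unfolding B_def P_def using t q by (rule emeasure_active_path_le(2))
  have "emeasure P (\<Inter>k. B k) \<le> path_weight_sum w X k t" for k
  proof -
    have "emeasure P (\<Inter>k. B k) \<le> emeasure P (B k)"
      using B_sets by (intro emeasure_mono) auto
    also have "\<dots> \<le> path_weight_sum w X k t"
      by (rule B_le)
    finally show ?thesis .
  qed
  then have "emeasure P (\<Inter>k. B k) = 0"
    using fin by (rule ennreal_eq_0_if_le_summable_terms)
  moreover have "{a \<in> space P. infinite (active_descendants X a t)} \<subseteq> (\<Inter>k. B k)"
    unfolding B_def using infinite_active_descendants_imp_active_path by auto
  ultimately show ?thesis
    using B_sets by (intro AE_I') auto
qed

lemma AE_all_components_finite_GW:
  fixes X :: "nat list \<Rightarrow> nat" and q :: "nat list \<Rightarrow> real"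
  assumes q: "\<And>v. v \<in> GW_vertices X \<Longrightarrow> 0 \<le> q v \<and> q v \<le> 1 \<and> ennreal (q v) \<le> w v"
    and fin: "\<And>t. (\<Sum>k. path_weight_sum w X k t) \<noteq> \<top>"
  shows "AE a in \<Pi>\<^sub>M v\<in>GW_vertices X. measure_pmf (bernoulli_pmf (q v)).
           all_components_finite (GW_vertices X) tree_edge {v \<in> GW_vertices X. a v}"
proof -
  have "AE a in \<Pi>\<^sub>M v\<in>GW_vertices X. measure_pmf (bernoulli_pmf (q v)).
          \<forall>t. t \<in> GW_vertices X \<longrightarrow> finite (active_descendants X a t)"
    unfolding AE_all_countable by (intro allI AE_impI AE_finite_active_descendants[OF _ q fin])
  then show ?thesis
    by eventually_elim (rule all_components_finite_GW, blast)
qed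

section \<open>Annealed bound\<close>

abbreviation iid_offspring :: "nat pmf \<Rightarrow> nat list set \<Rightarrow> (nat list \<Rightarrow> nat) measure" where
  "iid_offspring \<rho> I \<equiv> \<Pi>\<^sub>M u\<in>I. measure_pmf \<rho>"

lemma measurable_component_count_space:
  "(\<lambda>X. X u) \<in> iid_offspring \<rho> I \<rightarrow>\<^sub>M count_space UNIV"
proof (cases "u \<in> I")
  case True
  have "measurable (iid_offspring \<rho> I) (measure_pmf \<rho>) = measurable (iid_offspring \<rho> I) (count_space UNIV)"
    by (rule measurable_cong_sets) auto
  then show ?thesis
    using measurable_component_singleton[OF True] by blast
next
  case False
  then have "X u = undefined" if "X \<in> space (iid_offspring \<rho> I)" for X
    using that by (auto simp: space_PiM PiE_def extensional_def)
  then show ?thesis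
    by (subst measurable_cong[where g = "\<lambda>_. undefined"]) auto
qed

lemma measurable_path_weight_sum:
  "(\<lambda>X. path_weight_sum (\<lambda>u. f (X u)) X k t) \<in> borel_measurable (iid_offspring \<rho> I)"
proof (induction k arbitrary: t)
  case 0
  then show ?case by simp
next
  case (Suc k)
  have "(\<lambda>X. f n * (\<Sum>i<n. path_weight_sum (\<lambda>u. f (X u)) X k (t @ [i]))) \<in> borel_measurable (iid_offspring \<rho> I)" for n
    using Suc.IH by measurable
  then show ?case
    by (simp only: path_weight_sum.simps)
      (rule measurable_compose_countable[OF _ measurable_component_count_space])
qed

lemma path_weight_sum_update_non_descendant:
  assumes "\<nexists>r. u = t @ r"
  shows "path_weight_sum (\<lambda>v. f ((X(u := x)) v)) (X(u := x)) k t = path_weight_sum (\<lambda>v. f (X v)) X k t"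
  using assms
proof (induction k arbitrary: t)
  case 0
  then show ?case by simp
next
  case (Suc k)
  then have "u \<noteq> t" "\<And>i. \<nexists>r. u = (t @ [i]) @ r"
    by (metis append_Nil2, auto)
  then show ?case
    using Suc.IH by simp
qed

lemma nn_integral_path_weight_sum:
  "(\<integral>\<^sup>+X. path_weight_sum (\<lambda>u. f (X u)) X k t \<partial>iid_offspring \<rho> UNIV)
     = (\<integral>\<^sup>+x. of_nat x * f x \<partial>measure_pmf \<rho>) ^ k"
proof (induction k arbitrary: t)
  case 0
  interpret prob_space "iid_offspring \<rho> UNIV"
    by (rule prob_space_PiM) (rule prob_space_measure_pmf)
  show ?case
    by (simp add: emeasure_space_1)
next
  case (Suc k)
  define \<mu> where "\<mu> = (\<integral>\<^sup>+x. of_nat x * f x \<partial>measure_pmf \<rho>)"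
  let ?Q = "iid_offspring \<rho> (UNIV - {t})"
  let ?G = "\<lambda>i X. path_weight_sum (\<lambda>u. f (X u)) X k (t @ [i])"
  have not_below: "\<nexists>r. t = (t @ [i]) @ r" for i
    by (auto dest: arg_cong[where f = length])
  have child: "(\<integral>\<^sup>+Y. ?G i Y \<partial>?Q) = \<mu> ^ k" for i
  proof -
    have "(\<integral>\<^sup>+Y. ?G i Y \<partial>?Q) = (\<integral>\<^sup>+X. ?G i X \<partial>iid_offspring \<rho> UNIV)"
      by (rule nn_integral_PiM_remove[where M = "\<lambda>_. measure_pmf \<rho>" and i = t and I = UNIV and g = "?G i",
            OF prob_space_measure_pmf UNIV_I measurable_path_weight_sum measurable_path_weight_sum
            path_weight_sum_update_non_descendant[OF not_below]])
    then show ?thesis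
      using Suc.IH by (simp add: \<mu>_def)
  qed
  have "(\<integral>\<^sup>+X. path_weight_sum (\<lambda>u. f (X u)) X (Suc k) t \<partial>iid_offspring \<rho> UNIV)
      = (\<integral>\<^sup>+x. \<integral>\<^sup>+Y. path_weight_sum (\<lambda>u. f ((Y(t := x)) u)) (Y(t := x)) (Suc k) t \<partial>?Q \<partial>measure_pmf \<rho>)"
    by (rule nn_integral_PiM_split[OF prob_space_measure_pmf UNIV_I measurable_path_weight_sum])
  also have "\<dots> = (\<integral>\<^sup>+x. \<integral>\<^sup>+Y. f x * (\<Sum>i<x. ?G i Y) \<partial>?Q \<partial>measure_pmf \<rho>)"
    by (simp only: path_weight_sum.simps fun_upd_same path_weight_sum_update_non_descendant[OF not_below])
  also have "\<dots> = (\<integral>\<^sup>+x. f x * (\<Sum>i<x. \<integral>\<^sup>+Y. ?G i Y \<partial>?Q) \<partial>measure_pmf \<rho>)"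
  proof (intro nn_integral_cong)
    fix x :: nat
    have "(\<lambda>Y. \<Sum>i<x. ?G i Y) \<in> borel_measurable ?Q"
      by (intro borel_measurable_sum measurable_path_weight_sum)
    then show "(\<integral>\<^sup>+Y. f x * (\<Sum>i<x. ?G i Y) \<partial>?Q) = f x * (\<Sum>i<x. \<integral>\<^sup>+Y. ?G i Y \<partial>?Q)"
      by (simp add: nn_integral_cmult nn_integral_sum measurable_path_weight_sum)
  qed
  also have "\<dots> = (\<integral>\<^sup>+x. (of_nat x * f x) * \<mu> ^ k \<partial>measure_pmf \<rho>)"
    by (simp add: child mult_ac)
  also have "\<dots> = \<mu> ^ Suc k"
    unfolding \<mu>_def by (simp add: nn_integral_multc)
  finally show ?case
    by (simp add: \<mu>_def)
qed

lemma AE_path_weight_sum_finite: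
  assumes "(\<integral>\<^sup>+x. of_nat x * f x \<partial>measure_pmf \<rho>) < 1"
  shows "AE X in iid_offspring \<rho> UNIV. \<forall>t. (\<Sum>k. path_weight_sum (\<lambda>u. f (X u)) X k t) \<noteq> \<top>"
  unfolding AE_all_countable
proof
  fix t
  have "(\<integral>\<^sup>+X. (\<Sum>k. path_weight_sum (\<lambda>u. f (X u)) X k t) \<partial>iid_offspring \<rho> UNIV)
      = (\<Sum>k. (\<integral>\<^sup>+x. of_nat x * f x \<partial>measure_pmf \<rho>) ^ k)"
    by (simp add: nn_integral_suminf measurable_path_weight_sum nn_integral_path_weight_sum)
  then have fin: "(\<integral>\<^sup>+X. (\<Sum>k. path_weight_sum (\<lambda>u. f (X u)) X k t) \<partial>iid_offspring \<rho> UNIV) \<noteq> \<top>"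
    using suminf_power_ennreal_neq_top[OF assms] by simp
  show "AE X in iid_offspring \<rho> UNIV. (\<Sum>k. path_weight_sum (\<lambda>u. f (X u)) X k t) \<noteq> \<top>"
    using nn_integral_noteq_infinite[OF borel_measurable_suminf_order[OF measurable_path_weight_sum]] fin
    by simp
qed

lemma nbrs_GW_subset:
  assumes "v \<in> GW_vertices X"
  shows "nbrs (GW_vertices X) tree_edge v \<subseteq> insert (butlast v) ((\<lambda>i. v @ [i]) ` {..<X v})"
proof
  fix u assume "u \<in> nbrs (GW_vertices X) tree_edge v"
  then have u: "u \<in> GW_vertices X" "tree_edge v u"
    by (auto simp: nbrs_def)
  consider i where "u = v @ [i]" | i where "v = u @ [i]"
    using u(2) unfolding tree_edge_def by blast
  then show "u \<in> insert (butlast v) ((\<lambda>i. v @ [i]) ` {..<X v})"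
  proof cases
    case (1 i)
    then have "i < X v"
      using u(1) by (simp add: GW_vertices_append GW_path_Cons)
    then show ?thesis
      using 1 by blast
  next
    case (2 i)
    then show ?thesis by simp
  qed
qed

lemma locally_finite_GW: "locally_finite (GW_vertices X) tree_edge"
  unfolding locally_finite_def using nbrs_GW_subset by (blast intro: finite_subset)

lemma card_cl_GW:
  assumes "v \<in> GW_vertices X"
  shows "1 \<le> card (cl (GW_vertices X) tree_edge v)" "card (cl (GW_vertices X) tree_edge v) \<le> X v + 2"
proof -
  let ?S = "insert v (insert (butlast v) ((\<lambda>i. v @ [i]) ` {..<X v}))"
  have sub: "cl (GW_vertices X) tree_edge v \<subseteq> ?S"
    using nbrs_GW_subset[OF assms] by (auto simp: cl_def)
  then have "finite (cl (GW_vertices X) tree_edge v)"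
    by (rule finite_subset) simp
  then show "1 \<le> card (cl (GW_vertices X) tree_edge v)"
    by (simp add: cl_def Suc_le_eq card_gt_0_iff)
  have "card ?S \<le> card ((\<lambda>i. v @ [i]) ` {..<X v}) + 2"
    by (simp add: card_insert_if)
  also have "\<dots> \<le> X v + 2"
    using card_image_le[of "{..<X v}" "\<lambda>i. v @ [i]"] by simp
  finally show "card (cl (GW_vertices X) tree_edge v) \<le> X v + 2"
    using card_mono[OF _ sub] by simp
qed

lemma active_prob_nonneg: "0 \<le> \<Delta> \<Longrightarrow> 0 \<le> C k T \<Longrightarrow> 0 \<le> active_prob \<sigma> C T \<Delta> k"
  unfolding active_prob_def by simp

lemma active_prob_le_1: "active_prob \<sigma> C T \<Delta> k \<le> 1"
  unfolding active_prob_def by simp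

lemma active_prob_mono:
  assumes "0 \<le> \<Delta>" "\<Delta> \<le> \<Delta>'" "0 \<le> C k T" "C k T \<le> C k' T'"
  shows "active_prob \<sigma> C T \<Delta> k \<le> active_prob \<sigma> C T' \<Delta>' k'"
proof -
  have "\<Delta> * measure \<sigma> (space \<sigma>) * C k T \<le> \<Delta>' * measure \<sigma> (space \<sigma>) * C k' T'"
    using assms by (intro mult_mono) auto
  then show ?thesis
    unfolding active_prob_def by simp
qed

lemma finitely_dissociable_GW_if_path_weight_sums_finite:
  assumes C_pos: "\<And>k T. 1 \<le> k \<Longrightarrow> 0 \<le> T \<Longrightarrow> C k T > 0"
    and C_mono: "\<And>k k' T. 1 \<le> k \<Longrightarrow> k \<le> k' \<Longrightarrow> 0 \<le> T \<Longrightarrow> C k T \<le> C k' T"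
    and dominated: "\<And>T. 0 < T \<Longrightarrow> \<exists>\<Delta> w. 0 < \<Delta> \<and> \<Delta> \<le> T
         \<and> (\<forall>v\<in>GW_vertices X. ennreal (active_prob \<sigma> C T \<Delta> (X v + 2)) \<le> w v)
         \<and> (\<forall>t. (\<Sum>k. path_weight_sum w X k t) \<noteq> \<top>)"
  shows "finitely_dissociable \<sigma> C (GW_vertices X) tree_edge"
  unfolding finitely_dissociable_def
proof (intro conjI allI impI locally_finite_GW)
  fix T :: real
  assume T: "0 < T"
  then obtain \<Delta> w where \<Delta>: "0 < \<Delta>" "\<Delta> \<le> T"
    and w: "\<And>v. v \<in> GW_vertices X \<Longrightarrow> ennreal (active_prob \<sigma> C T \<Delta> (X v + 2)) \<le> w v"
    and fin: "\<And>t. (\<Sum>k. path_weight_sum w X k t) \<noteq> \<top>"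
    using dominated by blast
  have q: "0 \<le> active_prob \<sigma> C T \<Delta> (card (cl (GW_vertices X) tree_edge v))
        \<and> active_prob \<sigma> C T \<Delta> (card (cl (GW_vertices X) tree_edge v)) \<le> 1
        \<and> ennreal (active_prob \<sigma> C T \<Delta> (card (cl (GW_vertices X) tree_edge v))) \<le> w v"
    if v: "v \<in> GW_vertices X" for v
  proof -
    note card = card_cl_GW[OF v]
    have C: "0 \<le> C (card (cl (GW_vertices X) tree_edge v)) T"
      using C_pos[OF card(1), of T] T by simp
    have "active_prob \<sigma> C T \<Delta> (card (cl (GW_vertices X) tree_edge v)) \<le> active_prob \<sigma> C T \<Delta> (X v + 2)"
      using \<Delta> C C_mono[OF card] T by (intro active_prob_mono) auto
    then show ?thesis
      using \<Delta> C w[OF v] active_prob_nonneg active_prob_le_1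
      by (metis ennreal_leI less_imp_le order_trans)
  qed
  have "AE a in activity_law \<sigma> C T \<Delta> (GW_vertices X) tree_edge.
      all_components_finite (GW_vertices X) tree_edge {v \<in> GW_vertices X. a v}"
    unfolding activity_law_def using q fin by (rule AE_all_components_finite_GW)
  then show "\<exists>\<Delta>>0. \<Delta> \<le> T \<and> (AE a in activity_law \<sigma> C T \<Delta> (GW_vertices X) tree_edge.
      all_components_finite (GW_vertices X) tree_edge {v \<in> GW_vertices X. a v})"
    using \<Delta> by blast
qed

theorem mainTheorem9:
  fixes \<rho> :: "nat pmf"
    and \<sigma> :: "'j measure"
    and C :: "nat \<Rightarrow> real \<Rightarrow> real"
  assumes first_moment: "integrable (measure_pmf \<rho>) real"
    and J_countable: "countable (space \<sigma>)"
    and J_sets: "sets \<sigma> = Pow (space \<sigma>)"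
    and \<sigma>_finite: "finite_measure \<sigma>"
    and \<sigma>_pos: "emeasure \<sigma> (space \<sigma>) > 0"
    and C_pos: "\<And>k T. 1 \<le> k \<Longrightarrow> 0 \<le> T \<Longrightarrow> C k T > 0"
    and C_mono: "\<And>k k' T T'. 1 \<le> k \<Longrightarrow> k \<le> k' \<Longrightarrow> 0 \<le> T \<Longrightarrow> T \<le> T' \<Longrightarrow> C k T \<le> C k' T'"
  shows "AE X in offspring_law \<rho>. finitely_dissociable \<sigma> C (GW_vertices X) tree_edge"
proof -
  (* Only the total mass of sigma enters active_prob.
     The rates delta n are chosen for integer horizons n only, so that one null set serves all T. *)
  let ?w = "\<lambda>n \<delta> x. ennreal (active_prob \<sigma> C (real n) \<delta> (x + 2))"
  have "\<exists>\<delta>>0. (\<integral>\<^sup>+x. of_nat x * ?w n \<delta> x \<partial>measure_pmf \<rho>) < 1" for n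
    using exists_subcritical_rate[OF first_moment, of "\<lambda>x. measure \<sigma> (space \<sigma>) * C (x + 2) (real n)"] C_pos
    by (simp add: active_prob_def mult.assoc less_imp_le)
  then obtain \<delta> where \<delta>: "\<And>n. 0 < \<delta> n" "\<And>n. (\<integral>\<^sup>+x. of_nat x * ?w n (\<delta> n) x \<partial>measure_pmf \<rho>) < 1"
    by metis
  have "AE X in offspring_law \<rho>. \<forall>n t. (\<Sum>k. path_weight_sum (\<lambda>u. ?w n (\<delta> n) (X u)) X k t) \<noteq> \<top>"
    unfolding offspring_law_def AE_all_countable[of "\<lambda>n X. \<forall>t. _ n X t"]
    using AE_path_weight_sum_finite[OF \<delta>(2)] by blast
  then show ?thesis
  proof (rule eventually_mono)
    fix X assume fin: "\<forall>n t. (\<Sum>k. path_weight_sum (\<lambda>u. ?w n (\<delta> n) (X u)) X k t) \<noteq> \<top>"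
    show "finitely_dissociable \<sigma> C (GW_vertices X) tree_edge"
    proof (rule finitely_dissociable_GW_if_path_weight_sums_finite[OF C_pos C_mono[OF _ _ _ order_refl]])
      fix T :: real assume "0 < T"
      define n where "n = nat \<lceil>T\<rceil>"
      have "ennreal (active_prob \<sigma> C T (min T (\<delta> n)) (X v + 2)) \<le> ?w n (\<delta> n) (X v)" for v
        using \<open>0 < T\<close> \<delta>(1)[of n] C_pos[of "X v + 2" T] C_mono[of "X v + 2" "X v + 2" T "real n"]
        by (intro ennreal_leI active_prob_mono) (auto simp: n_def)
      then show "\<exists>\<Delta> w. 0 < \<Delta> \<and> \<Delta> \<le> T
          \<and> (\<forall>v\<in>GW_vertices X. ennreal (active_prob \<sigma> C T \<Delta> (X v + 2)) \<le> w v)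
          \<and> (\<forall>t. (\<Sum>k. path_weight_sum w X k t) \<noteq> \<top>)"
        using \<open>0 < T\<close> \<delta>(1)[of n] fin
        by (intro exI[of _ "min T (\<delta> n)"] exI[of _ "\<lambda>u. ?w n (\<delta> n) (X u)"]) auto
    qed
  qed
qed

end
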